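(* Let $G$ be a connected graph with $12$ vertices. Suppose one of the following holds: (1) $6\le \Delta(G)\le 8$ and $e(G)=12+k$ for some $1\le k\le 8$; (2) $\Delta(G)=9$ and $e(G)=12+k$ for some $1\le k\le 6$; (3) $\Delta(G)=10$ and $e(G)=12+k$ for some $1\le k\le 3$. Then $\frac{q(G)}{R(G)}<\frac{12}{\sqrt{11}}$.
   Context: All graphs are finite and simple; $e(G)$ is the number of edges and $\Delta(G)$ the maximum degree. For a vertex $u$, $d(u)$ is its degree. The Randić index is $R(G)=\sum_{\{u,v\}\in E(G)} \frac{1}{\sqrt{d(u)d(v)}}$. The signless Laplacian is $Q=D+A$ ($D$ the diagonal degree matrix, $A$ the adjacency matrix), and $q(G)$ is its largest eigenvalue. *)

theory Defs
  imports "Jordan_Normal_Form.Char_Poly"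
begin

definition simple_graph :: "nat \<Rightarrow> (nat \<Rightarrow> nat \<Rightarrow> bool) \<Rightarrow> bool" where
  "simple_graph n adj \<longleftrightarrow>
     (\<forall>u<n. \<forall>v<n. adj u v \<longrightarrow> adj v u) \<and> (\<forall>u<n. \<not> adj u u)"

definition connected_graph :: "nat \<Rightarrow> (nat \<Rightarrow> nat \<Rightarrow> bool) \<Rightarrow> bool" where
  "connected_graph n adj \<longleftrightarrow>
     (\<forall>u<n. \<forall>v<n. (\<lambda>x y. x < n \<and> y < n \<and> adj x y)\<^sup>*\<^sup>* u v)"

definition edges :: "nat \<Rightarrow> (nat \<Rightarrow> nat \<Rightarrow> bool) \<Rightarrow> nat set set" where
  "edges n adj = {{u, v} | u v. u < n \<and> v < n \<and> adj u v}"

definition num_edges :: "nat \<Rightarrow> (nat \<Rightarrow> nat \<Rightarrow> bool) \<Rightarrow> nat" where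
  "num_edges n adj = card (edges n adj)"

definition degree :: "nat \<Rightarrow> (nat \<Rightarrow> nat \<Rightarrow> bool) \<Rightarrow> nat \<Rightarrow> nat" where
  "degree n adj u = card {v. v < n \<and> adj u v}"

definition max_degree :: "nat \<Rightarrow> (nat \<Rightarrow> nat \<Rightarrow> bool) \<Rightarrow> nat" where
  "max_degree n adj = Max ((degree n adj) ` {0..<n})"

definition randic :: "nat \<Rightarrow> (nat \<Rightarrow> nat \<Rightarrow> bool) \<Rightarrow> real" where
  "randic n adj = (\<Sum>e\<in>edges n adj. 1 / sqrt (real (\<Prod>v\<in>e. degree n adj v)))"

definition signless_laplacian :: "nat \<Rightarrow> (nat \<Rightarrow> nat \<Rightarrow> bool) \<Rightarrow> real mat" where
  "signless_laplacian n adj =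
     mat n n (\<lambda>(i, j). (if i = j then real (degree n adj i) else 0) + (if adj i j then 1 else 0))"

definition q_index :: "nat \<Rightarrow> (nat \<Rightarrow> nat \<Rightarrow> bool) \<Rightarrow> real" where
  "q_index n adj = Max {k. eigenvalue (signless_laplacian n adj) k}"

end

theory Submission
  imports Defs "Jordan_Normal_Form.Spectral_Radius"
begin

text \<open>The numerator and the denominator are bounded separately. If x is an eigenvector of
  Q = D + A for the eigenvalue q, the row of Q at a vertex i maximising |x_j| / d_j gives
  q d_i <= d_i^2 + (sum of the degrees of the neighbours of i). That neighbour degree sum is at
  most d_i Delta and, as every other vertex has degree at least 1, at most 2 e - 11; under each of
  the three hypotheses this forces d_i^2 + (neighbour degree sum) < 12 d_i, hence q < 12.
  For the Randic index, summing (1/sqrt d_u - 1/sqrt 10)(1/sqrt d_v - 1/sqrt 10) >= 0 over the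
  edges and bounding sqrt d_u from below by the chord of sqrt between 1 and 10 gives R >= 7/2,
  because e >= 13. Finally 12 / (7/2) <= 12 / sqrt 11.\<close>

definition neighbours :: "nat \<Rightarrow> (nat \<Rightarrow> nat \<Rightarrow> bool) \<Rightarrow> nat \<Rightarrow> nat set" where
  "neighbours n adj u = {v. v < n \<and> adj u v}"

definition arcs :: "nat \<Rightarrow> (nat \<Rightarrow> nat \<Rightarrow> bool) \<Rightarrow> (nat \<times> nat) set" where
  "arcs n adj = {(u, v). u < n \<and> v < n \<and> adj u v}"

lemma finite_neighbours [simp]: "finite (neighbours n adj u)"
  by (simp add: neighbours_def)

lemma card_neighbours: "card (neighbours n adj u) = degree n adj u"
  by (simp add: neighbours_def degree_def)

lemma arcs_Sigma: "arcs n adj = Sigma {..<n} (neighbours n adj)"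
  by (auto simp: arcs_def neighbours_def)

lemma finite_arcs [simp]: "finite (arcs n adj)"
  by (simp add: arcs_Sigma)

lemma card_arcs: "card (arcs n adj) = (\<Sum>u<n. degree n adj u)"
  by (simp add: arcs_Sigma card_SigmaI card_neighbours)

lemma swap_arcs:
  assumes "simple_graph n adj"
  shows "prod.swap ` arcs n adj = arcs n adj"
proof (intro equalityI subsetI)
  fix p assume "p \<in> arcs n adj"
  then show "p \<in> prod.swap ` arcs n adj"
    using assms unfolding simple_graph_def arcs_def
    by (intro image_eqI[of _ _ "prod.swap p"]) auto
qed (use assms in \<open>auto simp: simple_graph_def arcs_def\<close>)

lemma sum_arcs_fst:
  fixes f :: "nat \<Rightarrow> 'a :: comm_semiring_1"
  shows "(\<Sum>p\<in>arcs n adj. f (fst p)) = (\<Sum>u<n. of_nat (degree n adj u) * f u)"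
proof -
  have "(\<Sum>u<n. \<Sum>v\<in>neighbours n adj u. f u) = (\<Sum>p\<in>arcs n adj. f (fst p))"
    unfolding arcs_Sigma by (subst sum.Sigma) (auto simp: split_def)
  then show ?thesis by (simp add: card_neighbours)
qed

lemma sum_arcs_snd:
  assumes "simple_graph n adj"
  shows "(\<Sum>p\<in>arcs n adj. f (snd p)) = (\<Sum>p\<in>arcs n adj. f (fst p))"
proof -
  have "(\<Sum>p\<in>arcs n adj. f (snd p)) = (\<Sum>p\<in>prod.swap ` arcs n adj. f (snd p))"
    by (simp add: swap_arcs[OF assms])
  also have "\<dots> = (\<Sum>p\<in>arcs n adj. f (fst p))"
    by (simp add: sum.reindex)
  finally show ?thesis .
qed

lemma arcs_with_ends:
  assumes "simple_graph n adj" "u < n" "v < n" "adj u v"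
  shows "{p \<in> arcs n adj. {fst p, snd p} = {u, v}} = {(u, v), (v, u)}"
proof (intro equalityI subsetI)
  fix p assume "p \<in> {p \<in> arcs n adj. {fst p, snd p} = {u, v}}"
  then show "p \<in> {(u, v), (v, u)}" by (cases p) (auto simp: doubleton_eq_iff)
next
  have "adj v u" using assms unfolding simple_graph_def by blast
  fix p assume "p \<in> {(u, v), (v, u)}"
  then show "p \<in> {p \<in> arcs n adj. {fst p, snd p} = {u, v}}"
    using assms \<open>adj v u\<close> by (auto simp: arcs_def insert_commute)
qed

lemma sum_arcs_edge:
  fixes h :: "nat set \<Rightarrow> 'a :: comm_semiring_1"
  assumes sg: "simple_graph n adj"
  shows "(\<Sum>p\<in>arcs n adj. h {fst p, snd p}) = 2 * (\<Sum>e\<in>edges n adj. h e)"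
proof -
  have ends: "(\<lambda>p. {fst p, snd p}) ` arcs n adj = edges n adj"
  proof (intro equalityI subsetI)
    fix e assume "e \<in> (\<lambda>p. {fst p, snd p}) ` arcs n adj"
    then obtain u v where "e = {u, v}" "u < n" "v < n" "adj u v" by (auto simp: arcs_def)
    then show "e \<in> edges n adj" unfolding edges_def by blast
  next
    fix e assume "e \<in> edges n adj"
    then obtain u v where "e = {u, v}" "(u, v) \<in> arcs n adj" by (auto simp: edges_def arcs_def)
    then show "e \<in> (\<lambda>p. {fst p, snd p}) ` arcs n adj" by (intro image_eqI[of _ _ "(u, v)"]) auto
  qed
  have "(\<Sum>p\<in>arcs n adj. h {fst p, snd p})
      = (\<Sum>e\<in>edges n adj. \<Sum>p\<in>{p \<in> arcs n adj. {fst p, snd p} = e}. h {fst p, snd p})"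
    by (rule sum.group[symmetric]) (auto simp flip: ends)
  also have "\<dots> = (\<Sum>e\<in>edges n adj. 2 * h e)"
  proof (rule sum.cong[OF refl])
    fix e assume "e \<in> edges n adj"
    then obtain u v where e: "e = {u, v}" "u < n" "v < n" "adj u v"
      unfolding edges_def by auto
    have "u \<noteq> v" using sg e unfolding simple_graph_def by auto
    then show "(\<Sum>p\<in>{p \<in> arcs n adj. {fst p, snd p} = e}. h {fst p, snd p}) = 2 * h e"
      using arcs_with_ends[OF sg e(2-4)] e(1) by (simp add: insert_commute mult_2)
  qed
  finally show ?thesis by (simp add: sum_distrib_left)
qed

lemma sum_degree_eq_twice_num_edges:
  assumes "simple_graph n adj"
  shows "(\<Sum>u<n. degree n adj u) = 2 * num_edges n adj"
  using sum_arcs_edge[OF assms, of "\<lambda>_. 1 :: nat"]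
  by (simp add: card_arcs num_edges_def)

lemma degree_ge_1_if_connected:
  assumes "connected_graph n adj" "u < n" "w < n" "u \<noteq> w"
  shows "1 \<le> degree n adj u"
proof -
  have "(\<lambda>x y. x < n \<and> y < n \<and> adj x y)\<^sup>*\<^sup>* u w"
    using assms unfolding connected_graph_def by auto
  then obtain x where "x < n" "adj u x"
    using \<open>u \<noteq> w\<close> by (cases rule: converse_rtranclpE) auto
  then have "neighbours n adj u \<noteq> {}" by (auto simp: neighbours_def)
  then show ?thesis by (simp add: card_neighbours[symmetric] Suc_le_eq card_gt_0_iff)
qed

lemma degree_le_max_degree: "u < n \<Longrightarrow> degree n adj u \<le> max_degree n adj"
  unfolding max_degree_def by (rule Max_ge) auto

lemma neighbour_degree_sum_le_max_degree:
  "(\<Sum>j\<in>neighbours n adj i. degree n adj j) \<le> degree n adj i * max_degree n adj"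
proof -
  have "(\<Sum>j\<in>neighbours n adj i. degree n adj j) \<le> (\<Sum>j\<in>neighbours n adj i. max_degree n adj)"
    by (rule sum_mono) (simp add: neighbours_def degree_le_max_degree)
  then show ?thesis by (simp add: card_neighbours)
qed

text \<open>Every vertex other than i and its neighbours still contributes at least 1 to the
  degree sum 2 e.\<close>

lemma neighbour_degree_sum_le_num_edges:
  assumes sg: "simple_graph n adj" and dpos: "\<And>j. j < n \<Longrightarrow> 1 \<le> degree n adj j"
    and i: "i < n"
  shows "(\<Sum>j\<in>neighbours n adj i. degree n adj j) + (n - 1) \<le> 2 * num_edges n adj"
proof -
  define C where "C = {..<n} - insert i (neighbours n adj i)"
  have iN: "i \<notin> neighbours n adj i" using sg i by (simp add: simple_graph_def neighbours_def)
  have sub: "insert i (neighbours n adj i) \<subseteq> {..<n}" using i by (auto simp: neighbours_def)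
  have "(\<Sum>j<n. degree n adj j)
      = (\<Sum>j\<in>C. degree n adj j) + degree n adj i + (\<Sum>j\<in>neighbours n adj i. degree n adj j)"
    unfolding C_def using sum.subset_diff[OF sub, of "degree n adj"] iN by (simp add: add.assoc)
  moreover have "card C \<le> (\<Sum>j\<in>C. degree n adj j)"
    using sum_mono[of C "\<lambda>_. 1" "degree n adj"] dpos by (simp add: C_def)
  moreover have "card C = n - Suc (degree n adj i)"
    unfolding C_def using sub iN by (simp add: card_Diff_subset card_neighbours)
  ultimately show ?thesis using sum_degree_eq_twice_num_edges[OF sg] by linarith
qed

lemma real_symmetric_eigenvalue_real:
  fixes A :: "real mat"
  assumes A: "A \<in> carrier_mat n n"
    and sym: "\<And>i j. i < n \<Longrightarrow> j < n \<Longrightarrow> A $$ (i, j) = A $$ (j, i)"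
    and ev: "eigenvalue (map_mat complex_of_real A) l"
  shows "Im l = 0"
proof -
  define a where "a i j = complex_of_real (A $$ (i, j))" for i j
  obtain v where "eigenvector (map_mat complex_of_real A) v l"
    using ev unfolding eigenvalue_def by auto
  then have v: "v \<in> carrier_vec n" "v \<noteq> 0\<^sub>v n" "map_mat complex_of_real A *\<^sub>v v = l \<cdot>\<^sub>v v"
    using A unfolding eigenvector_def by auto
  have row: "(\<Sum>j<n. a i j * v $ j) = l * v $ i" if "i < n" for i
  proof -
    have "(map_mat complex_of_real A *\<^sub>v v) $ i = (\<Sum>j<n. a i j * v $ j)"
      using that A v(1) by (auto simp: a_def scalar_prod_def lessThan_atLeast0 intro!: sum.cong)
    then show ?thesis using v(1,3) that by simp
  qed
  define s where "s = (\<Sum>i<n. \<Sum>j<n. cnj (v $ i) * a i j * v $ j)"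
  define r where "r = (\<Sum>i<n. (cmod (v $ i))\<^sup>2)"
  have "s = (\<Sum>i<n. cnj (v $ i) * (\<Sum>j<n. a i j * v $ j))"
    unfolding s_def by (simp add: sum_distrib_left mult.assoc)
  also have "\<dots> = (\<Sum>i<n. l * (cnj (v $ i) * v $ i))"
    by (intro sum.cong refl) (simp add: row)
  also have "\<dots> = l * complex_of_real r"
    unfolding r_def of_real_sum sum_distrib_left
    by (intro sum.cong refl) (simp only: complex_norm_square mult.commute)
  finally have s_eq: "s = l * complex_of_real r" .
  txt \<open>The Hermitian form of the eigenvector is real because A is symmetric.\<close>
  have "cnj s = (\<Sum>i<n. \<Sum>j<n. v $ i * a i j * cnj (v $ j))"
    unfolding s_def by (simp add: a_def cnj_sum)
  also have "\<dots> = (\<Sum>j<n. \<Sum>i<n. v $ i * a i j * cnj (v $ j))"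
    by (rule sum.swap)
  also have "\<dots> = s"
    unfolding s_def by (intro sum.cong refl) (auto simp: a_def sym mult.commute mult.left_commute)
  finally have "Im (cnj s) = Im s" by simp
  then have "Im s = 0" by simp
  obtain k where k: "k < n" "v $ k \<noteq> 0" using v(1,2) by (metis eq_vecI carrier_vecD index_zero_vec)
  have "0 < (cmod (v $ k))\<^sup>2" using k by simp
  also have "\<dots> \<le> r" unfolding r_def by (rule member_le_sum) (use k in auto)
  finally have "0 < r" .
  then show ?thesis using \<open>Im s = 0\<close> s_eq by simp
qed

lemma real_symmetric_has_eigenvalue:
  fixes A :: "real mat"
  assumes A: "A \<in> carrier_mat n n" and "0 < n"
    and sym: "\<And>i j. i < n \<Longrightarrow> j < n \<Longrightarrow> A $$ (i, j) = A $$ (j, i)"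
  shows "\<exists>k. eigenvalue A k"
proof -
  define C where "C = map_mat complex_of_real A"
  have C: "C \<in> carrier_mat n n" using A by (simp add: C_def)
  obtain l where l: "eigenvalue C l"
    using spectrum_non_empty[OF C \<open>0 < n\<close>] unfolding spectrum_def by auto
  have "complex_of_real (Re l) = l"
    using real_symmetric_eigenvalue_real[OF A sym] l by (simp add: C_def complex_eq_iff)
  then have "poly (char_poly C) (complex_of_real (Re l)) = 0"
    using l eigenvalue_root_char_poly[OF C] by simp
  then have "poly (map_poly complex_of_real (char_poly A)) (complex_of_real (Re l)) = 0"
    unfolding C_def of_real_hom.char_poly_hom[OF A] .
  then have "eigenvalue A (Re l)"
    by (simp add: eigenvalue_root_char_poly[OF A] of_real_hom.poly_map_poly)
  then show ?thesis ..
qed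

lemma signless_laplacian_carrier: "signless_laplacian n adj \<in> carrier_mat n n"
  by (simp add: signless_laplacian_def)

lemma q_index_eigenvalue:
  assumes sg: "simple_graph n adj" and "0 < n"
  shows "eigenvalue (signless_laplacian n adj) (q_index n adj)"
proof -
  let ?Q = "signless_laplacian n adj"
  have "?Q $$ (i, j) = ?Q $$ (j, i)" if "i < n" "j < n" for i j
  proof -
    have "adj i j = adj j i" using sg that unfolding simple_graph_def by blast
    then show ?thesis using that unfolding signless_laplacian_def by auto
  qed
  then obtain k where k: "eigenvalue ?Q k"
    using real_symmetric_has_eigenvalue[OF signless_laplacian_carrier \<open>0 < n\<close>] by blast
  have "finite {k. eigenvalue ?Q k}"
    using card_finite_spectrum(1)[OF signless_laplacian_carrier] unfolding spectrum_def .
  then have "Max {k. eigenvalue ?Q k} \<in> {k. eigenvalue ?Q k}" using k by (intro Max_in) auto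
  then show ?thesis unfolding q_index_def by simp
qed

lemma signless_laplacian_mult_vec_index:
  assumes "i < n" "v \<in> carrier_vec n"
  shows "(signless_laplacian n adj *\<^sub>v v) $ i
       = real (degree n adj i) * v $ i + (\<Sum>j\<in>neighbours n adj i. v $ j)"
proof -
  have "(signless_laplacian n adj *\<^sub>v v) $ i
      = (\<Sum>j\<in>{0..<n}. ((if i = j then real (degree n adj i) else 0) + (if adj i j then 1 else 0)) * v $ j)"
    using assms unfolding signless_laplacian_def by (auto simp: scalar_prod_def intro!: sum.cong)
  also have "\<dots> = (\<Sum>j\<in>{0..<n}. (if i = j then real (degree n adj i) * v $ j else 0))
              + (\<Sum>j\<in>{0..<n}. (if adj i j then v $ j else 0))"
    unfolding sum.distrib[symmetric] by (intro sum.cong refl) (simp add: distrib_right)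
  also have "\<dots> = real (degree n adj i) * v $ i + (\<Sum>j\<in>neighbours n adj i. v $ j)"
    using assms(1) by (simp add: sum.delta sum.inter_filter[symmetric] neighbours_def conj_commute)
  finally show ?thesis .
qed

lemma weighted_max_row_bound:
  fixes d y :: "nat \<Rightarrow> real"
  assumes dpos: "\<And>j. j \<in> N \<Longrightarrow> 0 < d j" and "0 < d i"
    and ymax: "\<And>j. j \<in> N \<Longrightarrow> \<bar>y j\<bar> \<le> \<bar>y i\<bar>" and "y i \<noteq> 0"
    and row: "(l - d i) * (d i * y i) = (\<Sum>j\<in>N. d j * y j)"
  shows "l * d i \<le> (d i)\<^sup>2 + (\<Sum>j\<in>N. d j)"
proof -
  have "\<bar>l - d i\<bar> * d i * \<bar>y i\<bar> = \<bar>\<Sum>j\<in>N. d j * y j\<bar>"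
    using \<open>0 < d i\<close> by (simp flip: row add: abs_mult)
  also have "\<dots> \<le> (\<Sum>j\<in>N. \<bar>d j * y j\<bar>)" by (rule sum_abs)
  also have "\<dots> = (\<Sum>j\<in>N. d j * \<bar>y j\<bar>)"
    using dpos by (intro sum.cong refl) (simp add: abs_mult less_imp_le)
  also have "\<dots> \<le> (\<Sum>j\<in>N. d j) * \<bar>y i\<bar>"
    unfolding sum_distrib_right by (rule sum_mono) (simp add: dpos ymax less_imp_le mult_left_mono)
  finally have "\<bar>l - d i\<bar> * d i \<le> (\<Sum>j\<in>N. d j)" using \<open>y i \<noteq> 0\<close> by simp
  moreover have "(l - d i) * d i \<le> \<bar>l - d i\<bar> * d i" using \<open>0 < d i\<close> by simp
  ultimately show ?thesis by (simp add: algebra_simps power2_eq_square)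
qed

text \<open>Gershgorin's bound for the matrix similar to Q obtained by conjugating with the degree
  matrix: i maximises the entries of the eigenvector scaled by the inverse degrees.\<close>

lemma signless_laplacian_eigenvalue_bound:
  fixes l :: real
  assumes dpos: "\<And>i. i < n \<Longrightarrow> 1 \<le> degree n adj i"
    and ev: "eigenvalue (signless_laplacian n adj) l"
  shows "\<exists>i<n. l * real (degree n adj i)
                \<le> (real (degree n adj i))\<^sup>2 + (\<Sum>j\<in>neighbours n adj i. real (degree n adj j))"
proof -
  define d where "d = (\<lambda>j. real (degree n adj j))"
  have dpos': "0 < d j" if "j < n" for j using dpos[OF that] by (simp add: d_def)
  obtain v where v: "v \<in> carrier_vec n" "v \<noteq> 0\<^sub>v n" "signless_laplacian n adj *\<^sub>v v = l \<cdot>\<^sub>v v"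
    using ev carrier_matD(1)[OF signless_laplacian_carrier[of n adj]]
    unfolding eigenvalue_def eigenvector_def by auto
  obtain k where k: "k < n" "v $ k \<noteq> 0" using v(1,2) by (metis eq_vecI carrier_vecD index_zero_vec)
  define y where "y j = v $ j / d j" for j
  obtain i where "is_arg_min (\<lambda>j. - \<bar>y j\<bar>) (\<lambda>j. j \<in> {..<n}) i"
    using ex_is_arg_min_if_finite[of "{..<n}" "\<lambda>j. - \<bar>y j\<bar>"] k by auto
  then have i: "i < n" and ymax: "\<And>j. j < n \<Longrightarrow> \<bar>y j\<bar> \<le> \<bar>y i\<bar>"
    by (auto simp: is_arg_min_linorder)
  have "y k \<noteq> 0" using k dpos'[OF k(1)] by (simp add: y_def)
  then have "y i \<noteq> 0" using ymax[OF k(1)] by auto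
  have v_eq: "v $ j = d j * y j" if "j < n" for j using dpos'[OF that] by (simp add: y_def)
  have "l * v $ i = d i * v $ i + (\<Sum>j\<in>neighbours n adj i. v $ j)"
    using signless_laplacian_mult_vec_index[OF i v(1), of adj] v i by (simp add: d_def)
  moreover have "(\<Sum>j\<in>neighbours n adj i. v $ j) = (\<Sum>j\<in>neighbours n adj i. d j * y j)"
    by (intro sum.cong refl) (simp add: v_eq neighbours_def)
  ultimately have row: "(l - d i) * (d i * y i) = (\<Sum>j\<in>neighbours n adj i. d j * y j)"
    by (simp add: v_eq[OF i] algebra_simps)
  have "l * d i \<le> (d i)\<^sup>2 + (\<Sum>j\<in>neighbours n adj i. d j)"
    by (rule weighted_max_row_bound[where N = "neighbours n adj i" and y = y, OF _ _ _ _ row])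
      (use dpos' ymax i \<open>y i \<noteq> 0\<close> in \<open>auto simp: neighbours_def\<close>)
  then show ?thesis using i unfolding d_def by blast
qed

lemma eigenvalue_signless_laplacian_lt:
  fixes l :: real and c :: nat
  assumes dpos: "\<And>i. i < n \<Longrightarrow> 1 \<le> degree n adj i"
    and local: "\<And>i. i < n \<Longrightarrow>
       (degree n adj i)\<^sup>2 + (\<Sum>j\<in>neighbours n adj i. degree n adj j) < c * degree n adj i"
    and ev: "eigenvalue (signless_laplacian n adj) l"
  shows "l < c"
proof -
  obtain i where i: "i < n" and bound: "l * real (degree n adj i)
      \<le> (real (degree n adj i))\<^sup>2 + (\<Sum>j\<in>neighbours n adj i. real (degree n adj j))"
    using signless_laplacian_eigenvalue_bound[OF dpos ev] by blast
  have "(real (degree n adj i))\<^sup>2 + (\<Sum>j\<in>neighbours n adj i. real (degree n adj j))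
      < real c * real (degree n adj i)"
    using local[OF i] by (metis of_nat_add of_nat_less_iff of_nat_mult of_nat_power of_nat_sum)
  then have "l * real (degree n adj i) < real c * real (degree n adj i)" using bound by linarith
  then show ?thesis using dpos[OF i] by simp
qed

lemma sq_add_lt_12_mult_of_degree_bounds:
  fixes d D S m :: nat
  assumes "1 \<le> d" "d \<le> D" "S \<le> d * D" "S + 11 \<le> 2 * m"
    and "(D \<le> 8 \<and> m \<le> 20) \<or> (D = 9 \<and> m \<le> 18) \<or> (D = 10 \<and> m \<le> 15)"
  shows "d\<^sup>2 + S < 12 * d"
proof -
  have "d \<le> 10" using assms by auto
  then have "d = 1 \<or> d = 2 \<or> d = 3 \<or> d = 4 \<or> d = 5 \<or> d = 6 \<or> d = 7 \<or> d = 8 \<or> d = 9 \<or> d = 10"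
    using \<open>1 \<le> d\<close> by presburger
  then show ?thesis using assms(2-5) unfolding power2_eq_square by (elim disjE; simp; arith)
qed

lemma inv_sqrt_mult_ge:
  fixes a b D :: real
  assumes "0 < a" "a \<le> D" "0 < b" "b \<le> D"
  shows "(1 / sqrt a + 1 / sqrt b) / sqrt D - 1 / D \<le> 1 / sqrt (a * b)"
proof -
  define c where "c = 1 / sqrt D"
  have "c \<le> 1 / sqrt a" "c \<le> 1 / sqrt b"
    using assms by (simp_all add: c_def frac_le)
  then have "0 \<le> (1 / sqrt a - c) * (1 / sqrt b - c)" by simp
  moreover have "c * c = 1 / D" using assms by (simp add: c_def)
  ultimately have "c * (1 / sqrt a + 1 / sqrt b) - 1 / D \<le> 1 / sqrt a * (1 / sqrt b)"
    by (simp add: algebra_simps)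
  then show ?thesis by (simp add: c_def real_sqrt_mult)
qed

lemma sqrt_ge_chord:
  fixes a D :: real
  assumes "1 \<le> a" "a \<le> D"
  shows "1 + (a - 1) / (1 + sqrt D) \<le> sqrt a"
proof -
  have "0 \<le> (sqrt a - 1) * (sqrt D - sqrt a)" using assms by simp
  moreover have "sqrt a * sqrt a = a" using assms by simp
  ultimately have "a - 1 \<le> (sqrt a - 1) * (1 + sqrt D)" by (simp add: algebra_simps)
  moreover have "0 < 1 + sqrt D" using assms by (simp add: add_pos_nonneg)
  ultimately have "(a - 1) / (1 + sqrt D) \<le> sqrt a - 1" by (simp add: pos_divide_le_eq)
  then show ?thesis by simp
qed

lemma randic_arc_sum:
  assumes sg: "simple_graph n adj"
  shows "2 * randic n adj
       = (\<Sum>p\<in>arcs n adj. 1 / sqrt (real (degree n adj (fst p)) * real (degree n adj (snd p))))"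
proof -
  have "2 * randic n adj
      = (\<Sum>p\<in>arcs n adj. 1 / sqrt (real (\<Prod>v\<in>{fst p, snd p}. degree n adj v)))"
    unfolding randic_def
    by (rule sum_arcs_edge[OF sg, where h = "\<lambda>e. 1 / sqrt (real (\<Prod>v\<in>e. degree n adj v))", symmetric])
  also have "\<dots> = (\<Sum>p\<in>arcs n adj.
      1 / sqrt (real (degree n adj (fst p)) * real (degree n adj (snd p))))"
  proof (rule sum.cong[OF refl])
    fix p assume "p \<in> arcs n adj"
    then obtain u v where uv: "p = (u, v)" "u < n" "adj u v" by (auto simp: arcs_def)
    then have "u \<noteq> v" using sg unfolding simple_graph_def by blast
    then show "1 / sqrt (real (\<Prod>v\<in>{fst p, snd p}. degree n adj v))
        = 1 / sqrt (real (degree n adj (fst p)) * real (degree n adj (snd p)))" by (simp add: uv)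
  qed
  finally show ?thesis .
qed

lemma randic_ge_sqrt_degree_sum:
  assumes sg: "simple_graph n adj"
    and deg: "\<And>u. u < n \<Longrightarrow> 1 \<le> degree n adj u \<and> real (degree n adj u) \<le> D"
  shows "(\<Sum>u<n. sqrt (degree n adj u)) / sqrt D - num_edges n adj / D \<le> randic n adj"
proof -
  define d where "d u = real (degree n adj u)" for u
  define X where "X = (\<Sum>u<n. sqrt (d u))"
  have sum_fst: "(\<Sum>p\<in>arcs n adj. 1 / sqrt (d (fst p))) = X"
    using sum_arcs_fst[where f = "\<lambda>u. 1 / sqrt (d u)"] by (simp add: X_def d_def real_div_sqrt)
  have sum_snd: "(\<Sum>p\<in>arcs n adj. 1 / sqrt (d (snd p))) = X"
    using sum_arcs_snd[OF sg, of "\<lambda>u. 1 / sqrt (d u)"] sum_fst by simp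
  have "(X + X) / sqrt D - card (arcs n adj) / D
      = (\<Sum>p\<in>arcs n adj. 1 / sqrt (d (fst p)) + 1 / sqrt (d (snd p))) / sqrt D
        - card (arcs n adj) / D"
    by (simp add: sum.distrib sum_fst sum_snd)
  also have "\<dots> = (\<Sum>p\<in>arcs n adj. (1 / sqrt (d (fst p)) + 1 / sqrt (d (snd p))) / sqrt D - 1 / D)"
    by (simp add: sum_subtractf sum_divide_distrib[symmetric])
  also have "\<dots> \<le> 2 * randic n adj"
    unfolding randic_arc_sum[OF sg] d_def
    by (rule sum_mono, rule inv_sqrt_mult_ge) (use deg in \<open>auto simp: arcs_def Suc_le_eq\<close>)
  finally have "(X + X) / sqrt D - card (arcs n adj) / D \<le> 2 * randic n adj" .
  moreover have "(X + X) / sqrt D = 2 * (X / sqrt D)" by simp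
  moreover have "real (card (arcs n adj)) / D = 2 * (real (num_edges n adj) / D)"
    by (simp add: card_arcs sum_degree_eq_twice_num_edges[OF sg])
  ultimately show ?thesis unfolding X_def d_def by linarith
qed

lemma randic_ge_num_edges_bound:
  assumes sg: "simple_graph n adj" and "1 \<le> D"
    and deg: "\<And>u. u < n \<Longrightarrow> 1 \<le> degree n adj u \<and> real (degree n adj u) \<le> D"
  shows "(n + (2 * num_edges n adj - real n) / (1 + sqrt D)) / sqrt D - num_edges n adj / D
         \<le> randic n adj"
proof -
  have "(\<Sum>u<n. 1 + (real (degree n adj u) - 1) / (1 + sqrt D)) \<le> (\<Sum>u<n. sqrt (degree n adj u))"
    by (rule sum_mono, rule sqrt_ge_chord) (use deg in auto)
  moreover have "(\<Sum>u<n. real (degree n adj u)) = 2 * num_edges n adj"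
    using sum_degree_eq_twice_num_edges[OF sg] by (metis of_nat_mult of_nat_numeral of_nat_sum)
  ultimately have "n + (2 * num_edges n adj - real n) / (1 + sqrt D)
      \<le> (\<Sum>u<n. sqrt (degree n adj u))"
    by (simp add: sum.distrib sum_subtractf sum_divide_distrib[symmetric])
  then have "(n + (2 * num_edges n adj - real n) / (1 + sqrt D)) / sqrt D
      \<le> (\<Sum>u<n. sqrt (degree n adj u)) / sqrt D"
    by (rule divide_right_mono) (use \<open>1 \<le> D\<close> in simp)
  then show ?thesis using randic_ge_sqrt_degree_sum[OF sg deg] by linarith
qed

text \<open>The bound of the previous lemma increases with the number of edges and is about 3.545
  for 13 edges, so the crude enclosure 3.1 <= sqrt 10 <= 3.17 suffices.\<close>

lemma randic_ge_7_div_2: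
  assumes sg: "simple_graph 12 adj"
    and deg: "\<And>u. u < 12 \<Longrightarrow> 1 \<le> degree 12 adj u \<and> degree 12 adj u \<le> 10"
    and "13 \<le> num_edges 12 adj"
  shows "7 / 2 \<le> randic 12 adj"
proof -
  define S where "S = sqrt 10"
  define m where "m = real (num_edges 12 adj)"
  define T where "T = 12 + (2 * m - 12) / (1 + S)"
  have S: "31/10 \<le> S" "S \<le> 317/100" unfolding S_def
    by (rule real_le_rsqrt, simp add: power2_eq_square, rule real_le_lsqrt, simp_all add: power2_eq_square)
  have "13 \<le> m" using assms(3) by (simp add: m_def)
  have R: "T / S - m / 10 \<le> randic 12 adj"
    using randic_ge_num_edges_bound[OF sg, of 10] deg by (simp add: T_def S_def m_def)
  have "(2 * m - 12) / (417/100) \<le> (2 * m - 12) / (1 + S)"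
    by (rule divide_left_mono) (use S \<open>13 \<le> m\<close> in auto)
  then have T_ge: "12 + (2 * m - 12) * 100 / 417 \<le> T" by (simp add: T_def)
  have "0 \<le> (2 * m - 12) * 100 / 417" using \<open>13 \<le> m\<close> by simp
  then have "0 \<le> T" using T_ge by linarith
  have "T / (317/100) \<le> T / S"
    by (rule divide_left_mono) (use S \<open>0 \<le> T\<close> in auto)
  then have "T * 100 / 317 \<le> T / S" by simp
  then show ?thesis using R T_ge \<open>13 \<le> m\<close> by argo
qed

theorem lemma3p6:
  fixes adj :: "nat \<Rightarrow> nat \<Rightarrow> bool"
  assumes "simple_graph 12 adj"
    and "connected_graph 12 adj"
    and "(6 \<le> max_degree 12 adj \<and> max_degree 12 adj \<le> 8 \<and>
           (\<exists>k. 1 \<le> k \<and> k \<le> 8 \<and> num_edges 12 adj = 12 + k))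
       \<or> (max_degree 12 adj = 9 \<and> (\<exists>k. 1 \<le> k \<and> k \<le> 6 \<and> num_edges 12 adj = 12 + k))
       \<or> (max_degree 12 adj = 10 \<and> (\<exists>k. 1 \<le> k \<and> k \<le> 3 \<and> num_edges 12 adj = 12 + k))"
  shows "q_index 12 adj / randic 12 adj < 12 / sqrt 11"
proof -
  note sg = assms(1)
  have cases: "(max_degree 12 adj \<le> 8 \<and> num_edges 12 adj \<le> 20)
      \<or> (max_degree 12 adj = 9 \<and> num_edges 12 adj \<le> 18)
      \<or> (max_degree 12 adj = 10 \<and> num_edges 12 adj \<le> 15)"
    and "13 \<le> num_edges 12 adj" and "max_degree 12 adj \<le> 10"
    using assms(3) by auto
  have dpos: "1 \<le> degree 12 adj u" if "u < 12" for u
    using degree_ge_1_if_connected[OF assms(2) that, of "if u = 0 then 1 else 0"] by auto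
  have "q_index 12 adj < real 12"
  proof (rule eigenvalue_signless_laplacian_lt[OF dpos _ q_index_eigenvalue[OF sg]])
    fix i :: nat assume i: "i < 12"
    have "(\<Sum>j\<in>neighbours 12 adj i. degree 12 adj j) + 11 \<le> 2 * num_edges 12 adj"
      using neighbour_degree_sum_le_num_edges[OF sg dpos i] by simp
    then show "(degree 12 adj i)\<^sup>2 + (\<Sum>j\<in>neighbours 12 adj i. degree 12 adj j)
        < 12 * degree 12 adj i"
      by (rule sq_add_lt_12_mult_of_degree_bounds[OF dpos[OF i] degree_le_max_degree[OF i]
            neighbour_degree_sum_le_max_degree _ cases])
  qed simp_all
  moreover have "7 / 2 \<le> randic 12 adj"
  proof (rule randic_ge_7_div_2[OF sg _ \<open>13 \<le> num_edges 12 adj\<close>])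
    fix u :: nat assume "u < 12"
    then show "1 \<le> degree 12 adj u \<and> degree 12 adj u \<le> 10"
      using dpos degree_le_max_degree[of u 12 adj] \<open>max_degree 12 adj \<le> 10\<close> by auto
  qed
  moreover have "sqrt 11 \<le> 7 / 2" by (rule real_le_lsqrt) (simp_all add: power2_eq_square)
  ultimately have "q_index 12 adj / randic 12 adj < 12 / randic 12 adj"
    and "12 / randic 12 adj \<le> 12 / sqrt 11"
    by (simp_all add: divide_strict_right_mono divide_left_mono)
  then show ?thesis by linarith
qed

end
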